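(* Let $\kappa,\lambda,\mu$ be cardinals. Then $\binom{\kappa}{\lambda}\rightarrow\binom{\kappa}{\mu}_2$ implies $\binom{\mathrm{cf}(\kappa)}{\lambda}\rightarrow\binom{\mathrm{cf}(\kappa)}{\mu}_2$.
   Context: Notation: $\binom{\lambda}{\kappa}\rightarrow\binom{\alpha}{\beta}_\chi$ means that for every coloring $c:\lambda\times\kappa\rightarrow\chi$ there are $A\subseteq\lambda$, $B\subseteq\kappa$ with $\mathrm{otp}(A)=\alpha$, $\mathrm{otp}(B)=\beta$ and $c\upharpoonright(A\times B)$ constant. *)

theory Defs
  imports Main
begin

text \<open>Cardinals and ordinals are represented as well-order relations (HOL's BNF
cardinal library); a cardinal is a relation r with Card_order r (an initial
well-order on Field r).  Order types are compared up to order-isomorphism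
(ordIso).\<close>

definition partition_rel ::
  "'a rel \<Rightarrow> 'b rel \<Rightarrow> 'c rel \<Rightarrow> 'd rel \<Rightarrow> nat \<Rightarrow> bool" where
  "partition_rel lam kap alpha beta chi \<longleftrightarrow>
     (\<forall>c :: 'a \<Rightarrow> 'b \<Rightarrow> nat.
        (\<forall>x\<in>Field lam. \<forall>y\<in>Field kap. c x y < chi) \<longrightarrow>
        (\<exists>A B. A \<subseteq> Field lam \<and> B \<subseteq> Field kap \<and>
               (Restr lam A, alpha) \<in> ordIso \<and> (Restr kap B, beta) \<in> ordIso \<and>
               (\<exists>i. \<forall>x\<in>A. \<forall>y\<in>B. c x y = i)))"

definition cofinal_in :: "'a rel \<Rightarrow> 'a set \<Rightarrow> bool" where
  "cofinal_in r X \<longleftrightarrow> X \<subseteq> Field r \<and> (\<forall>a\<in>Field r. \<exists>b\<in>X. (a, b) \<in> r)"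

definition is_cf :: "'a rel \<Rightarrow> 'd rel \<Rightarrow> bool" where
  "is_cf r rho \<longleftrightarrow> Well_order rho \<and>
     (\<exists>X. cofinal_in r X \<and> (rho, Restr r X) \<in> ordIso) \<and>
     (\<forall>X. cofinal_in r X \<longrightarrow> (rho, Restr r X) \<in> ordLeq)"

end

theory Submission
  imports Defs
begin

text \<open>Fix a cofinal set X \<subseteq> \<kappa> of order type cf(\<kappa>) and send every \<alpha> < \<kappa> to some
  \<xi> < cf(\<kappa>) whose copy in X lies above \<alpha>.  A colouring of cf(\<kappa>) \<times> \<lambda> pulls back along
  this map to a colouring of \<kappa> \<times> \<lambda>.  A homogeneous set of order type \<kappa> is cofinal in \<kappa>,
  because \<kappa> is a cardinal and bounded subsets of \<kappa> are smaller; so the copy in X of its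
  image is cofinal as well, and by minimality of cf(\<kappa>) the image has order type cf(\<kappa>).\<close>

unbundle cardinal_syntax

lemma Well_order_compat_inj_on_inflationary:
  assumes W: "Well_order r" and mono: "compat r r f" and inj: "inj_on f (Field r)"
    and into: "f ` Field r \<subseteq> Field r" and x: "x \<in> Field r"
  shows "(x, f x) \<in> r"
proof -
  have wf: "wf (r - Id)" and tot: "Total r" and refl: "Refl r" and anti: "antisym r"
    using W by (simp_all add: order_on_defs)
  have "x \<in> Field r \<longrightarrow> (x, f x) \<in> r"
  proof (induction x rule: wf_induct_rule[OF wf])
    case (1 x)
    show ?case
    proof (intro impI, rule ccontr)
      assume xF: "x \<in> Field r" and nx: "(x, f x) \<notin> r"
      have fxF: "f x \<in> Field r" using into xF by blast
      have ne: "f x \<noteq> x" using refl xF nx by (auto dest: refl_onD)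
      have below: "(f x, x) \<in> r" using tot xF fxF nx ne by (auto simp: total_on_def)
      have "(f x, f (f x)) \<in> r" using "1" below ne fxF by blast
      moreover have "(f (f x), f x) \<in> r" using mono below by (simp add: compat_def)
      ultimately have "f (f x) = f x" using anti by (blast dest: antisymD)
      with inj xF fxF ne show False by (blast dest: inj_onD)
    qed
  qed
  with x show ?thesis by blast
qed

lemma Well_order_Restr_ordLeq:
  assumes W: "Well_order r"
  shows "Restr r A \<le>o r"
proof (rule ccontr)
  have WA: "Well_order (Restr r A)" using W by (rule Well_order_Restr)
  assume "\<not> Restr r A \<le>o r"
  then have "r <o Restr r A" using not_ordLeq_iff_ordLess[OF W WA] by blast
  then obtain a where aF: "a \<in> Field (Restr r A)"
    and "r =o Restr (Restr r A) (underS (Restr r A) a)"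
    using ordLess_iff_ordIso_Restr[OF WA W] by blast
  then obtain g where g: "iso r (Restr (Restr r A) (underS (Restr r A) a)) g"
    unfolding ordIso_def by blast
  have below: "g x \<in> underS r a" if "x \<in> Field r" for x
  proof -
    have "g x \<in> Field (Restr (Restr r A) (underS (Restr r A) a))"
      using iso_Field[OF g] that by blast
    also have "\<dots> \<subseteq> underS (Restr r A) a" by (rule Field_Restr_subset)
    finally show ?thesis unfolding underS_def by blast
  qed
  have "compat r (Restr (Restr r A) (underS (Restr r A) a)) g"
    using g unfolding iso_def by (blast intro: embed_compat)
  then have "compat r r g" unfolding compat_def by blast
  moreover have "inj_on g (Field r)" using g by (rule iso_imp_inj_on)
  moreover have "g ` Field r \<subseteq> Field r" using below by (blast intro: underS_Field)
  moreover have aF': "a \<in> Field r" using aF unfolding Field_def by blast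
  ultimately have "(a, g a) \<in> r"
    by (rule Well_order_compat_inj_on_inflationary[OF W])
  moreover have "(g a, a) \<in> r" "g a \<noteq> a" using below[OF aF'] by (auto simp: underS_def)
  moreover have "antisym r" using W by (simp add: order_on_defs)
  ultimately show False by (auto dest: antisymD)
qed

lemma iso_Restr_ordIso:
  assumes W: "Well_order r" and W': "Well_order r'" and h: "iso r r' h" and S: "S \<subseteq> Field r"
  shows "Restr r S =o Restr r' (h ` S)"
proof -
  have "h ` S \<subseteq> Field r'" using S iso_Field[OF h] by blast
  then have FS: "Field (Restr r S) = S" and FhS: "Field (Restr r' (h ` S)) = h ` S"
    using W W' S by (simp_all add: Refl_Field_Restr2 order_on_defs)
  have "bij_betw h S (h ` S)"
    using iso_imp_inj_on[OF h] S by (auto intro: inj_on_subset simp: bij_betw_def)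
  moreover have "\<forall>a\<in>S. \<forall>b\<in>S. (a, b) \<in> Restr r S \<longleftrightarrow> (h a, h b) \<in> Restr r' (h ` S)"
    using h S unfolding iso_iff2 by blast
  ultimately have "iso (Restr r S) (Restr r' (h ` S)) h"
    unfolding iso_iff2 FS FhS by blast
  moreover have "Well_order (Restr r S)" "Well_order (Restr r' (h ` S))"
    using W W' by (simp_all add: Well_order_Restr)
  ultimately show ?thesis unfolding ordIso_def by blast
qed

lemma Card_order_cofinal_in_if_card_of_ordLeq:
  assumes C: "Card_order k" and AF: "A \<subseteq> Field k" and large: "|Field k| \<le>o |A|"
  shows "cofinal_in k A"
  unfolding cofinal_in_def
proof (intro conjI AF ballI)
  fix a assume aF: "a \<in> Field k"
  show "\<exists>b\<in>A. (a, b) \<in> k"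
  proof (rule ccontr)
    assume unbounded: "\<not> (\<exists>b\<in>A. (a, b) \<in> k)"
    have refl: "Refl k" and tot: "Total k"
      using card_order_on_well_order_on[OF C] by (simp_all add: order_on_defs)
    have "A \<subseteq> underS k a"
    proof
      fix b assume b: "b \<in> A"
      then have "b \<noteq> a" using unbounded refl aF by (auto dest: refl_onD)
      with b AF aF unbounded tot show "b \<in> underS k a"
        unfolding underS_def total_on_def by blast
    qed
    then have "|Field k| \<le>o |underS k a|"
      using large card_of_mono1 ordLeq_transitive by blast
    also have "|underS k a| <o k" using C aF by (rule card_of_underS)
    also have "k =o |Field k|" using card_of_Field_ordIso[OF C] by (rule ordIso_symmetric)
    finally show False using ordLess_irreflexive by blast
  qed
qed

lemma Card_order_cofinal_in_if_ordIso:
  assumes C: "Card_order k" and AF: "A \<subseteq> Field k" and iso: "Restr k A =o k"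
  shows "cofinal_in k A"
proof -
  have "Refl k" using card_order_on_well_order_on[OF C] by (simp add: order_on_defs)
  then have FA: "Field (Restr k A) = A" using AF by (rule Refl_Field_Restr2)
  have "k \<le>o Restr k A" using ordIso_symmetric[OF iso] by (rule ordIso_imp_ordLeq)
  then have "|Field k| \<le>o |Field (Restr k A)|" by (rule card_of_mono2)
  then have "|Field k| \<le>o |A|" by (simp only: FA)
  with C AF show ?thesis by (rule Card_order_cofinal_in_if_card_of_ordLeq)
qed

lemma is_cf_cofinal_map:
  assumes W: "Well_order k" and cf: "is_cf k rho"
  obtains f where "f ` Field k \<subseteq> Field rho"
    and "\<And>A. cofinal_in k A \<Longrightarrow> Restr rho (f ` A) =o rho"
proof -
  have Wrho: "Well_order rho" using cf by (simp add: is_cf_def)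
  have least: "rho \<le>o Restr k Y" if "cofinal_in k Y" for Y
    using cf that by (simp add: is_cf_def)
  obtain X where X: "cofinal_in k X" and "rho =o Restr k X"
    using cf by (auto simp: is_cf_def)
  then obtain h where h: "iso rho (Restr k X) h" unfolding ordIso_def by blast
  have XF: "X \<subseteq> Field k" using X by (simp add: cofinal_in_def)
  have "Refl k" using W by (simp add: order_on_defs)
  then have hX: "h ` Field rho = X" using iso_Field[OF h] Refl_Field_Restr2[OF _ XF] by simp
  define f where "f \<alpha> = (SOME \<xi>. \<xi> \<in> Field rho \<and> (\<alpha>, h \<xi>) \<in> k)" for \<alpha>
  have f: "f \<alpha> \<in> Field rho \<and> (\<alpha>, h (f \<alpha>)) \<in> k" if "\<alpha> \<in> Field k" for \<alpha>
  proof -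
    have "\<exists>x\<in>X. (\<alpha>, x) \<in> k" using X that by (simp add: cofinal_in_def)
    then obtain x where "x \<in> X" and "(\<alpha>, x) \<in> k" by blast
    moreover from \<open>x \<in> X\<close> obtain \<xi> where "\<xi> \<in> Field rho" and "x = h \<xi>"
      unfolding hX[symmetric] by blast
    ultimately have "\<exists>\<xi>. \<xi> \<in> Field rho \<and> (\<alpha>, h \<xi>) \<in> k" by blast
    then show ?thesis unfolding f_def by (rule someI_ex)
  qed
  show thesis
  proof
    show "f ` Field k \<subseteq> Field rho" using f by blast
  next
    fix A assume A: "cofinal_in k A"
    have AF: "A \<subseteq> Field k" using A by (simp add: cofinal_in_def)
    have SF: "f ` A \<subseteq> Field rho" using f AF by blast
    have SX: "h ` f ` A \<subseteq> X" using SF hX by blast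
    have "cofinal_in k (h ` f ` A)"
      unfolding cofinal_in_def
    proof (intro conjI ballI)
      show "h ` f ` A \<subseteq> Field k" using SX XF by blast
      fix a assume "a \<in> Field k"
      then have "\<exists>b\<in>A. (a, b) \<in> k" using A by (simp add: cofinal_in_def)
      then obtain b where b: "b \<in> A" "(a, b) \<in> k" by blast
      moreover have "(b, h (f b)) \<in> k" using f AF b by blast
      moreover have "trans k" using W by (simp add: order_on_defs)
      ultimately show "\<exists>y\<in>h ` f ` A. (a, y) \<in> k" by (blast dest: transD)
    qed
    then have "rho \<le>o Restr k (h ` f ` A)" by (rule least)
    also have "Restr k (h ` f ` A) = Restr (Restr k X) (h ` f ` A)" using SX by blast
    also have "\<dots> =o Restr rho (f ` A)"
      using iso_Restr_ordIso[OF Wrho Well_order_Restr[OF W] h SF] by (rule ordIso_symmetric)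
    finally have "rho \<le>o Restr rho (f ` A)" .
    with Well_order_Restr_ordLeq[OF Wrho] show "Restr rho (f ` A) =o rho"
      unfolding ordIso_iff_ordLeq by blast
  qed
qed

lemma partition_rel_transfer:
  assumes P: "partition_rel r lam alpha beta chi"
    and into: "f ` Field r \<subseteq> Field s"
    and otp: "\<And>A. A \<subseteq> Field r \<Longrightarrow> Restr r A =o alpha \<Longrightarrow> Restr s (f ` A) =o alpha'"
  shows "partition_rel s lam alpha' beta chi"
  unfolding partition_rel_def
proof (intro allI impI)
  fix c :: "_ \<Rightarrow> _ \<Rightarrow> nat"
  assume "\<forall>x\<in>Field s. \<forall>y\<in>Field lam. c x y < chi"
  then have "\<forall>x\<in>Field r. \<forall>y\<in>Field lam. c (f x) y < chi" using into by blast
  then obtain A B i where A: "A \<subseteq> Field r" "Restr r A =o alpha"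
    and B: "B \<subseteq> Field lam" "Restr lam B =o beta"
    and hom: "\<forall>x\<in>A. \<forall>y\<in>B. c (f x) y = i"
    using P[unfolded partition_rel_def, rule_format, of "\<lambda>x y. c (f x) y"] by blast
  have "f ` A \<subseteq> Field s" "Restr s (f ` A) =o alpha'" "\<forall>x\<in>f ` A. \<forall>y\<in>B. c x y = i"
    using into A otp hom by blast+
  with B show "\<exists>A B. A \<subseteq> Field s \<and> B \<subseteq> Field lam \<and>
      Restr s A =o alpha' \<and> Restr lam B =o beta \<and> (\<exists>i. \<forall>x\<in>A. \<forall>y\<in>B. c x y = i)"
    by blast
qed

theorem proposition2p9:
  fixes kappa :: "'a rel" and lambda :: "'b rel" and mu :: "'c rel" and rho :: "'d rel"
  assumes "Card_order kappa" and "Card_order lambda" and "Card_order mu"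
    and "is_cf kappa rho"
    and "partition_rel kappa lambda kappa mu 2"
  shows "partition_rel rho lambda rho mu 2"
proof -
  have W: "Well_order kappa" using assms(1) by (rule card_order_on_well_order_on)
  obtain f where into: "f ` Field kappa \<subseteq> Field rho"
    and cofinal: "\<And>A. cofinal_in kappa A \<Longrightarrow> Restr rho (f ` A) =o rho"
    using is_cf_cofinal_map[OF W assms(4)] by blast
  show ?thesis
    using assms(5) into
  proof (rule partition_rel_transfer)
    fix A assume "A \<subseteq> Field kappa" and "Restr kappa A =o kappa"
    with assms(1) have "cofinal_in kappa A" by (rule Card_order_cofinal_in_if_ordIso)
    then show "Restr rho (f ` A) =o rho" by (rule cofinal)
  qed
qed

end
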